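(* Assume the setup in the context. For $i\in\{n-2,n-1\}$ with $P(T=i)>0$, we have $P(|S|\le1\mid T=i)\ge\frac12$, where $S:=\sum_{j=1}^n v_j\epsilon_j$.
   Context: Let $n\ge4$ and let $v_1,\dots,v_n$ be real numbers with $\sum_{i=1}^n v_i^2\le1$ ordered so that $v_n\ge v_1\ge v_{n-1}\ge v_2\ge v_3\ge\cdots\ge v_{n-2}\ge0$. Let $\epsilon_1,\dots,\epsilon_n$ be independent Rademacher random variables ($\pm1$ with probability $\tfrac12$ each). For $t\in\{1,\dots,n-1\}$ put $X_t:=\sum_{i=1}^t v_i\epsilon_i$. Define the random time $T:=\min\big(\{t\le n-1: |X_t|>1-v_{t+1}\}\cup\{n-1\}\big)$. *)

theory Defs
  imports "HOL-Probability.Probability"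
begin

definition rademacher :: "nat \<Rightarrow> (nat \<Rightarrow> real) pmf" where
  "rademacher n = pmf_of_set (PiE {1..n} (\<lambda>_. {-1, 1}))"

definition partS :: "(nat \<Rightarrow> real) \<Rightarrow> nat \<Rightarrow> (nat \<Rightarrow> real) \<Rightarrow> real" where
  "partS v t eps = (\<Sum>i=1..t. v i * eps i)"

definition stopT :: "nat \<Rightarrow> (nat \<Rightarrow> real) \<Rightarrow> (nat \<Rightarrow> real) \<Rightarrow> nat" where
  "stopT n v eps = Min ({t \<in> {1..n-1}. \<bar>partS v t eps\<bar> > 1 - v (t+1)} \<union> {n-1})"

end

theory Submission
  imports Defs
begin

text \<open>Flipping the last sign \<open>\<epsilon>_n\<close> preserves the uniform measure and leaves \<open>T\<close>
  unchanged, as \<open>T\<close> only depends on the first \<open>n - 1\<close> signs. On \<open>{T = i}\<close> the walk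
  has not left the region \<open>|X_t| \<le> 1 - v_(t+1)\<close> before time \<open>n - 2\<close>, which forces
  \<open>|X_(n-1)| \<le> 1 + v_(n-1) \<le> 1 + v_n\<close>. As \<open>|v_n| \<le> 1\<close>, one of the two values
  \<open>X_(n-1) \<plusminus> v_n\<close> lies in \<open>[-1, 1]\<close>, so the flip maps the outcomes in \<open>{T = i}\<close>
  with \<open>|S| > 1\<close> injectively to outcomes with \<open>|S| \<le> 1\<close>.\<close>

lemma card_le_twice_card_of_inj_on_Diff:
  assumes "finite A" "G \<subseteq> A" "inj_on f (A - G)" "f ` (A - G) \<subseteq> G"
  shows "card A \<le> 2 * card G"
proof -
  have "card (A - G) \<le> card G"
    using assms by (intro card_inj_on_le) (auto intro: finite_subset)
  moreover have "card A = card G + card (A - G)"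
    using assms(1,2) by (metis card_Diff_subset card_mono finite_subset le_add_diff_inverse)
  ultimately show ?thesis by linarith
qed

lemma cond_prob_pmf_of_set_ge_half_of_involution:
  fixes \<Omega> :: "'a set" and f :: "'a \<Rightarrow> 'a"
  assumes "finite \<Omega>" "\<Omega> \<noteq> {}"
    and f_into: "\<And>x. x \<in> \<Omega> \<Longrightarrow> f x \<in> \<Omega>"
    and f_invol: "\<And>x. x \<in> \<Omega> \<Longrightarrow> f (f x) = x"
    and Q_f: "\<And>x. x \<in> \<Omega> \<Longrightarrow> Q x \<Longrightarrow> Q (f x)"
    and P_or_P_f: "\<And>x. x \<in> \<Omega> \<Longrightarrow> Q x \<Longrightarrow> P x \<or> P (f x)"
    and Q_pos: "\<P>(x in measure_pmf (pmf_of_set \<Omega>). Q x) > 0"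
  shows "\<P>(x in measure_pmf (pmf_of_set \<Omega>). P x \<bar> Q x) \<ge> 1/2"
proof -
  define A where "A = {x \<in> \<Omega>. Q x}"
  define G where "G = {x \<in> \<Omega>. P x \<and> Q x}"
  have prob_eq: "\<P>(x in measure_pmf (pmf_of_set \<Omega>). R x) = card {x \<in> \<Omega>. R x} / card \<Omega>"
    for R :: "'a \<Rightarrow> bool"
    using assms(1,2) by (simp add: measure_pmf_of_set Int_def)
  have "card A \<le> 2 * card G"
  proof (rule card_le_twice_card_of_inj_on_Diff)
    show "inj_on f (A - G)"
      unfolding A_def by (rule inj_on_inverseI[where g = f]) (auto intro: f_invol)
    show "f ` (A - G) \<subseteq> G"
      unfolding A_def G_def using f_into f_invol Q_f P_or_P_f by fastforce
  qed (use assms(1) in \<open>auto simp: A_def G_def\<close>)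
  moreover have "card A > 0"
    using Q_pos unfolding prob_eq by (simp add: A_def zero_less_divide_iff)
  ultimately show ?thesis
    unfolding cond_prob_def prob_eq A_def[symmetric] G_def[symmetric] conj_commute[of "Q _"]
    using assms(1,2) by (simp add: card_gt_0_iff field_simps)
qed

lemma abs_add_or_diff_le_1:
  fixes x y :: real
  assumes "\<bar>x\<bar> \<le> 1 + \<bar>y\<bar>" "\<bar>y\<bar> \<le> 1"
  shows "\<bar>x + y\<bar> \<le> 1 \<or> \<bar>x - y\<bar> \<le> 1"
  using assms by linarith

lemma abs_eq_1_if_in_sign_vectors:
  fixes eps :: "nat \<Rightarrow> real"
  assumes "eps \<in> PiE {1..n} (\<lambda>_. {-1, 1})" "j \<in> {1..n}"
  shows "\<bar>eps j\<bar> = 1"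
  using PiE_mem[OF assms] by auto

lemma partS_Suc: "partS v (Suc t) eps = partS v t eps + v (Suc t) * eps (Suc t)"
  unfolding partS_def by (simp add: sum.cl_ivl_Suc)

lemma abs_partS_Suc_le:
  assumes "\<bar>eps (Suc t)\<bar> = 1"
  shows "\<bar>partS v (Suc t) eps\<bar> \<le> \<bar>partS v t eps\<bar> + \<bar>v (Suc t)\<bar>"
proof -
  have "\<bar>v (Suc t) * eps (Suc t)\<bar> = \<bar>v (Suc t)\<bar>"
    using assms by (simp add: abs_mult)
  then show ?thesis
    unfolding partS_Suc using abs_triangle_ineq[of "partS v t eps" "v (Suc t) * eps (Suc t)"]
    by linarith
qed

lemma partS_fun_upd_ge: "t < k \<Longrightarrow> partS v t (eps(k := x)) = partS v t eps"
  unfolding partS_def by (intro sum.cong) auto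

lemma stopT_fun_upd: "stopT n v (eps(n := x)) = stopT n v eps"
  unfolding stopT_def
  by (rule arg_cong[where f = "\<lambda>S. Min (S \<union> {n - 1})"]) (auto simp: partS_fun_upd_ge)

lemma abs_partS_le_before_stopT:
  assumes "1 \<le> t" "t < stopT n v eps"
  shows "\<bar>partS v t eps\<bar> \<le> 1 - v (Suc t)"
proof (rule ccontr)
  assume "\<not> ?thesis"
  then have "stopT n v eps \<le> t"
    using assms unfolding stopT_def by (intro Min_le) auto
  with assms(2) show False by simp
qed

lemma abs_partS_before_last_le:
  assumes "4 \<le> n" "0 \<le> v (n - 2)" "0 \<le> v (n - 1)"
    and eps: "eps \<in> PiE {1..n} (\<lambda>_. {-1, 1})"
    and T: "stopT n v eps \<in> {n - 2, n - 1}"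
  shows "\<bar>partS v (n - 1) eps\<bar> \<le> 1 + v (n - 1)"
proof -
  have idx: "Suc (n - 3) = n - 2" "Suc (n - 2) = n - 1"
    using assms(1) by auto
  have "\<bar>eps (n - 2)\<bar> = 1" "\<bar>eps (n - 1)\<bar> = 1"
    using abs_eq_1_if_in_sign_vectors[OF eps] assms(1) by simp_all
  then have step: "\<bar>partS v (n - 2) eps\<bar> \<le> \<bar>partS v (n - 3) eps\<bar> + v (n - 2)"
      "\<bar>partS v (n - 1) eps\<bar> \<le> \<bar>partS v (n - 2) eps\<bar> + v (n - 1)"
    using abs_partS_Suc_le[of eps "n - 3" v, unfolded idx]
      abs_partS_Suc_le[of eps "n - 2" v, unfolded idx] assms(2,3) by simp_all
  have "\<bar>partS v (n - 2) eps\<bar> \<le> 1"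
  proof (cases "stopT n v eps = n - 1")
    case True
    then have "\<bar>partS v (n - 2) eps\<bar> \<le> 1 - v (n - 1)"
      using abs_partS_le_before_stopT[of "n - 2" n v eps, unfolded idx] assms(1) by simp
    with assms(3) show ?thesis by linarith
  next
    case False
    with T have "\<bar>partS v (n - 3) eps\<bar> \<le> 1 - v (n - 2)"
      using abs_partS_le_before_stopT[of "n - 3" n v eps, unfolded idx] assms(1) by simp
    with step(1) show ?thesis by linarith
  qed
  with step(2) show ?thesis by linarith
qed

lemma abs_partS_or_last_flipped_le_1:
  assumes "4 \<le> n" "0 \<le> v (n - 2)" "0 \<le> v (n - 1)" "v (n - 1) \<le> \<bar>v n\<bar>" "\<bar>v n\<bar> \<le> 1"
    and eps: "eps \<in> PiE {1..n} (\<lambda>_. {-1, 1})"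
    and T: "stopT n v eps \<in> {n - 2, n - 1}"
  shows "\<bar>partS v n eps\<bar> \<le> 1 \<or> \<bar>partS v n (eps(n := - eps n))\<bar> \<le> 1"
proof -
  have idx: "Suc (n - 1) = n"
    using assms(1) by simp
  have "\<bar>eps n\<bar> = 1"
    using abs_eq_1_if_in_sign_vectors[OF eps] assms(1) by simp
  then have "\<bar>v n * eps n\<bar> = \<bar>v n\<bar>"
    by (simp add: abs_mult)
  moreover have "\<bar>partS v (n - 1) eps\<bar> \<le> 1 + \<bar>v n\<bar>"
    using abs_partS_before_last_le[OF assms(1-3) eps T] assms(4) by linarith
  ultimately have
    "\<bar>partS v (n - 1) eps + v n * eps n\<bar> \<le> 1 \<or> \<bar>partS v (n - 1) eps - v n * eps n\<bar> \<le> 1"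
    using abs_add_or_diff_le_1 assms(5) by metis
  moreover have "partS v n eps = partS v (n - 1) eps + v n * eps n"
    using partS_Suc[of v "n - 1" eps, unfolded idx] .
  moreover have "partS v n (eps(n := - eps n)) = partS v (n - 1) eps - v n * eps n"
    using partS_Suc[of v "n - 1" "eps(n := - eps n)", unfolded idx] assms(1)
    by (simp add: partS_fun_upd_ge)
  ultimately show ?thesis by simp
qed

theorem mainTheorem8:
  fixes n :: nat and v :: "nat \<Rightarrow> real" and i :: nat
  assumes "n \<ge> 4"
    and "(\<Sum>j=1..n. (v j)^2) \<le> 1"
    and "v 1 \<le> v n" and "v (n-1) \<le> v 1" and "v 2 \<le> v (n-1)"
    and "\<And>j. 2 \<le> j \<Longrightarrow> j < n-2 \<Longrightarrow> v (j+1) \<le> v j"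
    and "v (n-2) \<ge> 0"
    and "i \<in> {n-2, n-1}"
    and "\<P>(eps in measure_pmf (rademacher n). stopT n v eps = i) > 0"
  shows "\<P>(eps in measure_pmf (rademacher n). \<bar>partS v n eps\<bar> \<le> 1 \<bar> stopT n v eps = i) \<ge> 1/2"
proof -
  have "v (n - 2) \<le> v 2"
    using lift_Suc_antimono_le_ivl[of "{2..<n-2}" v 2 "n - 2"] assms(1,6) by force
  then have v_n1_nonneg: "0 \<le> v (n - 1)"
    using assms(5,7) by linarith
  have "(v n)^2 \<le> (\<Sum>j=1..n. (v j)^2)"
    using assms(1) by (intro member_le_sum) auto
  then have "(v n)^2 \<le> 1"
    using assms(2) by linarith
  then have v_n_le_1: "\<bar>v n\<bar> \<le> 1"
    by (simp add: abs_square_le_1)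
  show ?thesis
    unfolding rademacher_def
  proof (rule cond_prob_pmf_of_set_ge_half_of_involution[where f = "\<lambda>eps. eps(n := - eps n)"])
    fix eps :: "nat \<Rightarrow> real"
    assume eps: "eps \<in> PiE {1..n} (\<lambda>_. {-1, 1})" and T: "stopT n v eps = i"
    show "\<bar>partS v n eps\<bar> \<le> 1 \<or> \<bar>partS v n (eps(n := - eps n))\<bar> \<le> 1"
      using abs_partS_or_last_flipped_le_1[OF assms(1,7) v_n1_nonneg _ v_n_le_1 eps]
        assms(3,4,8) T by fastforce
  qed (use assms(1,9) in \<open>auto simp: rademacher_def stopT_fun_upd PiE_iff PiE_eq_empty_iff
      extensional_def intro: finite_PiE\<close>)
qed

end
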